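(* Let $K\subset\mathbb{R}^m$ be a convex cone containing the nonnegative orthant $\mathbb{R}^m_+$. For $i\in[m]$ let $C_i=\{c\in K: c_j\ge 0\ \forall j\ne i\}$ and let $C=\sum_{i=1}^m C_i$ (Minkowski sum). Then a vector $c\in\mathbb{R}^m$ having at least one negative entry belongs to $C$ if and only if $c\in\sum_{i: c_i<0} C_i$. *)

theory Defs
  imports "HOL-Analysis.Analysis"
begin

definition msum :: "'i set \<Rightarrow> ('i \<Rightarrow> 'a::comm_monoid_add set) \<Rightarrow> 'a set" where
  "msum I S = {(\<Sum>i\<in>I. x i) | x. \<forall>i\<in>I. x i \<in> S i}"

definition Cset :: "(real ^ 'm) set \<Rightarrow> 'm \<Rightarrow> (real ^ 'm) set" where
  "Cset K i = {c \<in> K. \<forall>j. j \<noteq> i \<longrightarrow> c $ j \<ge> 0}"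

end

theory Submission
  imports Defs
begin

text \<open>
  Write \<open>c = \<Sum>\<^sub>k x\<^sub>k\<close> with \<open>x\<^sub>k \<in> C\<^sub>k\<close> and let \<open>j\<close> be an index with \<open>c\<^sub>j \<ge> 0\<close>. The summand
  \<open>x\<^sub>j\<close> can be absorbed by the others: if \<open>x\<^sub>j\<close> is nonnegative it is added to any other summand;
  otherwise the other summands have positive total \<open>j\<close>-th coordinate \<open>\<sigma>\<close>, and each \<open>x\<^sub>k\<close> takes
  the share \<open>x\<^sub>k\<^sub>j / \<sigma>\<close> of \<open>x\<^sub>j\<close>, which keeps its \<open>j\<close>-th coordinate nonnegative because
  \<open>\<sigma> + x\<^sub>j\<^sub>j = c\<^sub>j \<ge> 0\<close>. Eliminating the indices with \<open>c\<^sub>j \<ge> 0\<close> one at a time leaves a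
  decomposition over the negative coordinates of \<open>c\<close>; the converse holds because \<open>0 \<in> C\<^sub>k\<close>.
\<close>

lemma msum_memI: "\<forall>i\<in>I. x i \<in> S i \<Longrightarrow> sum x I \<in> msum I S"
  unfolding msum_def by blast

lemma msum_memE:
  assumes "c \<in> msum I S"
  obtains x where "\<forall>i\<in>I. x i \<in> S i" "c = sum x I"
  using assms unfolding msum_def by blast

lemma msum_mono_zero:
  assumes "finite J" "I \<subseteq> J" "\<And>i. i \<in> J - I \<Longrightarrow> 0 \<in> S i"
  shows "msum I S \<subseteq> msum J S"
proof
  fix c assume "c \<in> msum I S"
  then obtain x where x: "\<forall>i\<in>I. x i \<in> S i" and c: "c = sum x I"
    by (rule msum_memE)
  define y where "y i = (if i \<in> I then x i else 0)" for i
  have "\<forall>i\<in>J. y i \<in> S i" using x assms(3) by (auto simp: y_def)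
  moreover have "(\<Sum>i\<in>J. y i) = c"
    unfolding c using assms(1,2) by (intro sum.mono_neutral_cong_right) (auto simp: y_def)
  ultimately show "c \<in> msum J S" by (metis msum_memI)
qed

lemma zero_in_Cset:
  assumes "{x. \<forall>j. x $ j \<ge> 0} \<subseteq> K"
  shows "0 \<in> Cset K i"
  using assms by (auto simp: Cset_def)

lemma Cset_add_nonneg:
  assumes "convex_cone K" "x \<in> Cset K i" "v \<in> K" "\<And>l. 0 \<le> v $ l"
  shows "x + v \<in> Cset K i"
proof -
  have "x + v \<in> K" using assms(2,3) convex_cone_add[OF assms(1)] by (simp add: Cset_def)
  moreover have "0 \<le> (x + v) $ l" if "l \<noteq> i" for l
    using assms(2) assms(4)[of l] that by (simp add: Cset_def)
  ultimately show ?thesis by (simp add: Cset_def)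
qed

lemma msum_Cset_absorb_nonneg:
  assumes K: "convex_cone K" and T: "finite T" "i \<in> T"
    and x: "\<forall>k\<in>T. x k \<in> Cset K k"
    and v: "v \<in> K" "\<And>l. 0 \<le> v $ l"
  shows "v + sum x T \<in> msum T (Cset K)"
proof -
  define y where "y = x(i := x i + v)"
  have "x i + v \<in> Cset K i" using x T(2) by (intro Cset_add_nonneg[OF K _ v]) simp
  then have "\<forall>k\<in>T. y k \<in> Cset K k" using x by (simp add: y_def)
  moreover have "sum y T = v + sum x T"
  proof -
    have "sum y T = y i + sum y (T - {i})" using T by (rule sum.remove)
    also have "sum y (T - {i}) = sum x (T - {i})" by (simp add: y_def)
    also have "y i + sum x (T - {i}) = v + (x i + sum x (T - {i}))" by (simp add: y_def)
    also have "x i + sum x (T - {i}) = sum x T" using T by (rule sum.remove[symmetric])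
    finally show ?thesis .
  qed
  ultimately show ?thesis by (metis msum_memI)
qed

lemma msum_Cset_absorb_spread:
  assumes K: "convex_cone K" and T: "finite T" "j \<notin> T"
    and x: "\<forall>k\<in>T. x k \<in> Cset K k" and v: "v \<in> Cset K j"
    and \<sigma>_pos: "0 < (\<Sum>k\<in>T. x k $ j)"
    and total: "0 \<le> v $ j + (\<Sum>k\<in>T. x k $ j)"
  shows "v + sum x T \<in> msum T (Cset K)"
proof -
  define \<sigma> where "\<sigma> = (\<Sum>k\<in>T. x k $ j)"
  define y where "y k = x k + (x k $ j / \<sigma>) *\<^sub>R v" for k
  have xj_nonneg: "0 \<le> x k $ j" if "k \<in> T" for k
    using x that T(2) by (fastforce simp: Cset_def)
  have "y k \<in> Cset K k" if k: "k \<in> T" for k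
  proof -
    have "y k \<in> K" unfolding y_def using x v k xj_nonneg[OF k] \<sigma>_pos
      by (intro convex_cone_add[OF K] convex_cone_scaleR[OF K]) (auto simp: Cset_def \<sigma>_def)
    moreover have "0 \<le> y k $ l" if "l \<noteq> k" for l
    proof (cases "l = j")
      case True
      have "y k $ j = (x k $ j / \<sigma>) * (\<sigma> + v $ j)"
        using \<sigma>_pos by (simp add: y_def \<sigma>_def field_simps)
      also have "\<dots> \<ge> 0"
        using xj_nonneg[OF k] \<sigma>_pos total by (simp add: \<sigma>_def)
      finally show ?thesis using True by simp
    next
      case False
      then show ?thesis
        using x v k \<open>l \<noteq> k\<close> xj_nonneg[OF k] \<sigma>_pos by (auto simp: y_def Cset_def \<sigma>_def)
    qed
    ultimately show ?thesis by (simp add: Cset_def)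
  qed
  moreover have "sum y T = v + sum x T"
  proof -
    have "sum y T = sum x T + ((\<Sum>k\<in>T. x k $ j) / \<sigma>) *\<^sub>R v"
      by (simp add: y_def sum.distrib scaleR_sum_left sum_divide_distrib)
    then show ?thesis using \<sigma>_pos by (simp add: \<sigma>_def)
  qed
  ultimately show ?thesis by (metis msum_memI)
qed

lemma msum_Cset_absorb:
  assumes K: "convex_cone K" and T: "finite T" "i \<in> T" "j \<notin> T"
    and x: "\<forall>k\<in>T. x k \<in> Cset K k" and v: "v \<in> Cset K j"
    and total: "0 \<le> (v + sum x T) $ j"
  shows "v + sum x T \<in> msum T (Cset K)"
proof (cases "0 \<le> v $ j")
  case True
  then have "0 \<le> v $ l" for l using v by (cases "l = j") (auto simp: Cset_def)
  then show ?thesis using msum_Cset_absorb_nonneg[OF K T(1,2) x] v by (simp add: Cset_def)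
next
  case False
  then show ?thesis using msum_Cset_absorb_spread[OF K T(1,3) x v] total by simp
qed

lemma msum_Cset_remove_nonneg_coords:
  assumes K: "convex_cone K" and I: "finite I" "I \<noteq> {}"
    and D: "finite D" "I \<inter> D = {}" "\<forall>j\<in>D. 0 \<le> c $ j"
    and c: "c \<in> msum (I \<union> D) (Cset K)"
  shows "c \<in> msum I (Cset K)"
  using D c
proof (induction D rule: finite_induct)
  case empty
  then show ?case by simp
next
  case (insert j D)
  let ?S = "I \<union> D"
  have S: "finite ?S" "j \<notin> ?S" using I(1) insert by auto
  obtain i where "i \<in> I" using I by auto
  have "c \<in> msum (insert j ?S) (Cset K)" using insert.prems(3) by simp
  then obtain x where x: "\<forall>k\<in>insert j ?S. x k \<in> Cset K k"
    and c: "c = sum x (insert j ?S)"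
    by (rule msum_memE)
  have c_split: "c = x j + sum x ?S" using c S by simp
  have "i \<in> ?S" "\<forall>k\<in>?S. x k \<in> Cset K k" "x j \<in> Cset K j" using \<open>i \<in> I\<close> x by auto
  moreover have "0 \<le> (x j + sum x ?S) $ j" using insert.prems(2) c_split by simp
  ultimately have "x j + sum x ?S \<in> msum ?S (Cset K)"
    using msum_Cset_absorb[OF K S(1) _ S(2)] by blast
  then show ?case using c_split insert.IH insert.prems(1,2) by simp
qed

theorem mainTheorem5:
  fixes K :: "(real ^ 'm) set" and c :: "real ^ 'm"
  assumes "convex_cone K"
    and "{x. \<forall>j. x $ j \<ge> 0} \<subseteq> K"
    and "\<exists>i. c $ i < 0"
  shows "c \<in> msum UNIV (Cset K) \<longleftrightarrow> c \<in> msum {i. c $ i < 0} (Cset K)"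
proof
  let ?I = "{i. c $ i < 0}"
  assume "c \<in> msum UNIV (Cset K)"
  then have "c \<in> msum (?I \<union> - ?I) (Cset K)" by (simp only: Compl_partition)
  moreover have "?I \<noteq> {}" using assms(3) by blast
  moreover have "\<forall>j\<in>- ?I. 0 \<le> c $ j" by (simp add: not_less)
  ultimately show "c \<in> msum ?I (Cset K)"
    using msum_Cset_remove_nonneg_coords[OF assms(1), of ?I "- ?I"] by simp
next
  assume "c \<in> msum {i. c $ i < 0} (Cset K)"
  moreover have "msum {i. c $ i < 0} (Cset K) \<subseteq> msum UNIV (Cset K)"
    using zero_in_Cset[OF assms(2)] by (intro msum_mono_zero) simp_all
  ultimately show "c \<in> msum UNIV (Cset K)" by blast
qed

end
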